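(* Let $G$ be a simple connected undirected graph with vertex set $V(G)=\{1,2,\ldots,n\}$. Define the coefficient matrix $A$, indexed by pairs $(u,v)$ with $1\le u<v\le n$ and pairs $(i,j)$ with $1\le i<j\le n$, by $A_{(u,v),(i,j)}=1$ if $d(u,i)\neq d(v,i)$ and $d(u,j)\neq d(v,j)$, and $A_{(u,v),(i,j)}=0$ otherwise. For a subset $W\subseteq V(G)$, let $x_k=1$ if $k\in W$ and $x_k=0$ otherwise ($1\le k\le n$), and let $y_{ij}=1$ if $i,j\in W$ and $y_{ij}=0$ otherwise ($1\le i<j\le n$). Then $W$ is a fault-tolerant resolving set of $G$ if and only if the following constraints are satisfied: (a) $\sum_{i=1}^{n-1}\sum_{j=i+1}^{n} A_{(u,v),(i,j)}\,y_{ij}\ge 1$ for all $1\le u<v\le n$; (b) $y_{ij}\le \tfrac12 x_i+\tfrac12 x_j$ for all $1\le i<j\le n$; (c) $y_{ij}\ge x_i+x_j-1$ for all $1\le i<j\le n$; (d) $y_{ij}\in\{0,1\}$ and $x_k\in\{0,1\}$ for all $1\le i<j\le n$, $1\le k\le n$.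
   Context: $d(u,v)$ denotes the length of a shortest $u$–$v$ path in $G$. A vertex $w$ resolves vertices $u,v$ if $d(u,w)\neq d(v,w)$. A set $W\subseteq V(G)$ is a resolving set if every two distinct vertices of $G$ are resolved by some vertex of $W$. A resolving set $W$ is fault-tolerant if $W\setminus\{w\}$ is also a resolving set of $G$ for each $w\in W$. *)

theory Defs
  imports Complex_Main
begin

definition simple_graph :: "nat \<Rightarrow> (nat \<Rightarrow> nat \<Rightarrow> bool) \<Rightarrow> bool" where
  "simple_graph n E \<longleftrightarrow>
     (\<forall>u v. E u v \<longrightarrow> u \<in> {1..n} \<and> v \<in> {1..n}) \<and>
     (\<forall>u v. E u v \<longrightarrow> E v u) \<and> (\<forall>u. \<not> E u u)"

definition walk :: "(nat \<Rightarrow> nat \<Rightarrow> bool) \<Rightarrow> nat list \<Rightarrow> bool" where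
  "walk E xs \<longleftrightarrow> xs \<noteq> [] \<and> (\<forall>i. i + 1 < length xs \<longrightarrow> E (xs ! i) (xs ! (i + 1)))"

definition connected_graph :: "nat \<Rightarrow> (nat \<Rightarrow> nat \<Rightarrow> bool) \<Rightarrow> bool" where
  "connected_graph n E \<longleftrightarrow>
     (\<forall>u\<in>{1..n}. \<forall>v\<in>{1..n}. \<exists>xs. walk E xs \<and> hd xs = u \<and> last xs = v)"

definition dist :: "(nat \<Rightarrow> nat \<Rightarrow> bool) \<Rightarrow> nat \<Rightarrow> nat \<Rightarrow> nat" where
  "dist E u v = (LEAST k. \<exists>xs. walk E xs \<and> hd xs = u \<and> last xs = v \<and> length xs = k + 1)"

definition resolves :: "(nat \<Rightarrow> nat \<Rightarrow> bool) \<Rightarrow> nat \<Rightarrow> nat \<Rightarrow> nat \<Rightarrow> bool" where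
  "resolves E w u v \<longleftrightarrow> dist E u w \<noteq> dist E v w"

definition resolving_set :: "nat set \<Rightarrow> (nat \<Rightarrow> nat \<Rightarrow> bool) \<Rightarrow> nat set \<Rightarrow> bool" where
  "resolving_set V E W \<longleftrightarrow> W \<subseteq> V \<and>
     (\<forall>u\<in>V. \<forall>v\<in>V. u \<noteq> v \<longrightarrow> (\<exists>w\<in>W. resolves E w u v))"

definition fault_tolerant_resolving_set :: "nat set \<Rightarrow> (nat \<Rightarrow> nat \<Rightarrow> bool) \<Rightarrow> nat set \<Rightarrow> bool" where
  "fault_tolerant_resolving_set V E W \<longleftrightarrow>
     resolving_set V E W \<and> (\<forall>w\<in>W. resolving_set V E (W - {w}))"

end

theory Submission
  imports Defs
begin

text \<open>W is fault-tolerant resolving exactly when every pair of distinct vertices is resolved by two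
  distinct vertices of W: removing one of them still leaves the other. Constraint (a) counts the
  pairs of W-vertices that both resolve (u,v), so it says that such a pair exists; constraints
  (b)--(d) merely force y to be the indicator of W \<times> W, which holds by construction. Distances
  enter only through the resolving relation.\<close>

lemma fault_tolerant_resolving_set_iff_two_resolvers:
  assumes "W \<subseteq> V"
  shows "fault_tolerant_resolving_set V E W \<longleftrightarrow>
    (\<forall>u\<in>V. \<forall>v\<in>V. u \<noteq> v \<longrightarrow>
       (\<exists>i\<in>W. \<exists>j\<in>W. i \<noteq> j \<and> resolves E i u v \<and> resolves E j u v))"
    (is "_ \<longleftrightarrow> ?two")
proof
  assume ft: "fault_tolerant_resolving_set V E W"
  show ?two
  proof (intro ballI impI)
    fix u v assume uv: "u \<in> V" "v \<in> V" "u \<noteq> v"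
    from ft uv obtain i where i: "i \<in> W" "resolves E i u v"
      unfolding fault_tolerant_resolving_set_def resolving_set_def by blast
    from ft i(1) have "resolving_set V E (W - {i})"
      unfolding fault_tolerant_resolving_set_def by blast
    with uv obtain j where "j \<in> W - {i}" "resolves E j u v"
      unfolding resolving_set_def by blast
    with i show "\<exists>i\<in>W. \<exists>j\<in>W. i \<noteq> j \<and> resolves E i u v \<and> resolves E j u v" by blast
  qed
next
  assume two: ?two
  have "resolving_set V E (W - {w})" for w
    unfolding resolving_set_def
  proof (intro conjI ballI impI)
    show "W - {w} \<subseteq> V" using assms by blast
    fix u v assume "u \<in> V" "v \<in> V" "u \<noteq> v"
    with two obtain i j where "i \<in> W" "j \<in> W" "i \<noteq> j" "resolves E i u v" "resolves E j u v"
      by blast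
    then show "\<exists>w'\<in>W - {w}. resolves E w' u v" by (cases "i = w") auto
  qed
  moreover have "resolving_set V E W"
    using two assms unfolding resolving_set_def by blast
  ultimately show "fault_tolerant_resolving_set V E W"
    unfolding fault_tolerant_resolving_set_def by blast
qed

lemma sum_upper_pairs_ge_1_iff:
  fixes f :: "nat \<Rightarrow> nat \<Rightarrow> real"
  assumes f01: "\<And>i j. f i j \<in> {0, 1}"
  shows "(\<Sum>i = 1..n - 1. \<Sum>j = i + 1..n. f i j) \<ge> 1 \<longleftrightarrow>
         (\<exists>i j. 1 \<le> i \<and> i < j \<and> j \<le> n \<and> f i j = 1)"
proof
  assume sum_ge_1: "(\<Sum>i = 1..n - 1. \<Sum>j = i + 1..n. f i j) \<ge> 1"
  show "\<exists>i j. 1 \<le> i \<and> i < j \<and> j \<le> n \<and> f i j = 1"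
  proof (rule ccontr)
    assume "\<nexists>i j. 1 \<le> i \<and> i < j \<and> j \<le> n \<and> f i j = 1"
    with f01 have "\<forall>i\<in>{1..n - 1}. \<forall>j\<in>{i + 1..n}. f i j = 0" by fastforce
    then have "(\<Sum>i = 1..n - 1. \<Sum>j = i + 1..n. f i j) = 0" by simp
    with sum_ge_1 show False by simp
  qed
next
  assume "\<exists>i j. 1 \<le> i \<and> i < j \<and> j \<le> n \<and> f i j = 1"
  then obtain i j where ij: "1 \<le> i" "i < j" "j \<le> n" "f i j = 1" by blast
  have nonneg: "f i j \<ge> 0" for i j using f01[of i j] by auto
  have "f i j \<le> (\<Sum>j = i + 1..n. f i j)"
    by (rule member_le_sum) (use ij nonneg in auto)
  also have "\<dots> \<le> (\<Sum>i = 1..n - 1. \<Sum>j = i + 1..n. f i j)"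
    by (rule member_le_sum) (use ij nonneg in \<open>auto intro: sum_nonneg\<close>)
  finally show "(\<Sum>i = 1..n - 1. \<Sum>j = i + 1..n. f i j) \<ge> 1" using ij by simp
qed

lemma ex_distinct_pair_iff_ex_ordered_pair:
  fixes S :: "'a::linorder set"
  shows "(\<exists>i\<in>S. \<exists>j\<in>S. i \<noteq> j \<and> P i \<and> P j) \<longleftrightarrow> (\<exists>i j. i < j \<and> i \<in> S \<and> j \<in> S \<and> P i \<and> P j)"
  by (metis linorder_neq_iff order_less_irrefl)

lemma ball_distinct_pairs_iff_ordered_pairs:
  assumes sym: "\<And>u v. R u v \<longleftrightarrow> R v u"
  shows "(\<forall>u\<in>{1..n}. \<forall>v\<in>{1..n}. u \<noteq> v \<longrightarrow> R u v) \<longleftrightarrow>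
         (\<forall>u v. 1 \<le> u \<and> u < v \<and> v \<le> (n::nat) \<longrightarrow> R u v)"
proof (intro iffI allI impI ballI)
  fix u v assume "\<forall>u v. 1 \<le> u \<and> u < v \<and> v \<le> n \<longrightarrow> R u v"
    and "u \<in> {1..n}" "v \<in> {1..n}" "u \<noteq> v"
  then show "R u v" using sym[of u v] by (cases "u < v") auto
qed auto

theorem proposition2p3:
  fixes n :: nat and E :: "nat \<Rightarrow> nat \<Rightarrow> bool" and W :: "nat set"
    and A :: "nat \<Rightarrow> nat \<Rightarrow> nat \<Rightarrow> nat \<Rightarrow> real"
    and x :: "nat \<Rightarrow> real" and y :: "nat \<Rightarrow> nat \<Rightarrow> real"
  assumes "simple_graph n E" and "connected_graph n E"
    and "W \<subseteq> {1..n}"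
  defines "A \<equiv> (\<lambda>u v i j. if dist E u i \<noteq> dist E v i \<and> dist E u j \<noteq> dist E v j then 1 else 0)"
    and "x \<equiv> (\<lambda>k. if k \<in> W then 1 else 0)"
    and "y \<equiv> (\<lambda>i j. if i \<in> W \<and> j \<in> W then 1 else 0)"
  shows "fault_tolerant_resolving_set {1..n} E W \<longleftrightarrow>
    (\<forall>u v. 1 \<le> u \<and> u < v \<and> v \<le> n \<longrightarrow>
        (\<Sum>i = 1..n - 1. \<Sum>j = i + 1..n. A u v i j * y i j) \<ge> 1) \<and>
    (\<forall>i j. 1 \<le> i \<and> i < j \<and> j \<le> n \<longrightarrow> y i j \<le> 1/2 * x i + 1/2 * x j) \<and>
    (\<forall>i j. 1 \<le> i \<and> i < j \<and> j \<le> n \<longrightarrow> y i j \<ge> x i + x j - 1) \<and>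
    (\<forall>i j. 1 \<le> i \<and> i < j \<and> j \<le> n \<longrightarrow> y i j \<in> {0, 1}) \<and>
    (\<forall>k. 1 \<le> k \<and> k \<le> n \<longrightarrow> x k \<in> {0, 1})"
proof -
  define two_resolvers where "two_resolvers u v \<longleftrightarrow>
    (\<exists>i\<in>W. \<exists>j\<in>W. i \<noteq> j \<and> resolves E i u v \<and> resolves E j u v)" for u v
  have indicator_constraints:
    "(\<forall>i j. 1 \<le> i \<and> i < j \<and> j \<le> n \<longrightarrow> y i j \<le> 1/2 * x i + 1/2 * x j) \<and>
     (\<forall>i j. 1 \<le> i \<and> i < j \<and> j \<le> n \<longrightarrow> y i j \<ge> x i + x j - 1) \<and>
     (\<forall>i j. 1 \<le> i \<and> i < j \<and> j \<le> n \<longrightarrow> y i j \<in> {0, 1}) \<and>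
     (\<forall>k. 1 \<le> k \<and> k \<le> n \<longrightarrow> x k \<in> {0, 1})"
    unfolding x_def y_def by auto
  have covering_constraint:
    "(\<Sum>i = 1..n - 1. \<Sum>j = i + 1..n. A u v i j * y i j) \<ge> 1 \<longleftrightarrow> two_resolvers u v" for u v
  proof -
    have "(\<Sum>i = 1..n - 1. \<Sum>j = i + 1..n. A u v i j * y i j) \<ge> 1 \<longleftrightarrow>
        (\<exists>i j. 1 \<le> i \<and> i < j \<and> j \<le> n \<and> i \<in> W \<and> j \<in> W \<and> resolves E i u v \<and> resolves E j u v)"
      by (subst sum_upper_pairs_ge_1_iff) (auto simp: A_def y_def resolves_def)
    also have "\<dots> \<longleftrightarrow> two_resolvers u v"
      unfolding two_resolvers_def ex_distinct_pair_iff_ex_ordered_pair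
      using assms(3) by (metis atLeastAtMost_iff subsetD)
    finally show ?thesis .
  qed
  have "two_resolvers u v \<longleftrightarrow> two_resolvers v u" for u v
    unfolding two_resolvers_def resolves_def by (simp add: eq_commute)
  then have two_resolvers_everywhere: "fault_tolerant_resolving_set {1..n} E W \<longleftrightarrow>
      (\<forall>u v. 1 \<le> u \<and> u < v \<and> v \<le> n \<longrightarrow> two_resolvers u v)"
    unfolding fault_tolerant_resolving_set_iff_two_resolvers[OF assms(3)] two_resolvers_def[symmetric]
    by (rule ball_distinct_pairs_iff_ordered_pairs)
  show ?thesis
    unfolding covering_constraint using two_resolvers_everywhere indicator_constraints by blast
qed

end
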